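(* Let $k\ge 3$ be an integer. There is no deterministic wait-free algorithm that solves the consensus task for $2$ processes in the asynchronous shared-memory model using only atomic read-write registers and (any number of) $\text{WRN}_{k}$ objects.
   Context: A $\text{WRN}_{k}$ (Write and Read Next) object is a deterministic atomic shared object with a single operation $\texttt{WRN}(i,v)$, where $i\in\{0,\dots,k-1\}$ and $v\neq\bot$. Its state consists of $k$ values $A[0],\dots,A[k-1]$, initially all $\bot$; the operation $\texttt{WRN}(i,v)$ atomically sets $A[i]\gets v$ and returns $A[(i+1)\bmod k]$ (i.e. the value passed in the most recent previous invocation with index $(i+1)\bmod k$, or $\bot$ if there was none). Model: asynchronous processes communicate only by applying atomic operations (steps) to shared objects; any process may crash (stop taking steps). An algorithm is wait-free if every non-crashed process produces its output in a finite number of its own steps. Consensus task: each process has an input value and every non-faulty process must output a value such that (Validity) every output is the input of some process and (Agreement) all outputs are equal. *)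

theory Defs
  imports Main
begin

text \<open>Shared objects are indexed by an arbitrary type 'o; each object is either an atomic
  read/write register holding a value of type 'v, or a WRN_k object whose state is
  an array A of k entries in 'v option (None = bottom).\<close>

datatype 'v objstate = RegS 'v | WRNS "nat \<Rightarrow> 'v option"

datatype ('o, 'v) op = Rd 'o | Wr 'o 'v | Wrn 'o nat 'v

datatype ('o, 'v, 'a) act = Decide 'a | Invoke "('o, 'v) op"

text \<open>None means the operation is not applicable to the object (wrong object kind or
  index out of range); such a step cannot be taken.\<close>
fun apply_op :: "nat \<Rightarrow> ('o \<Rightarrow> 'v objstate) \<Rightarrow> ('o, 'v) op
                  \<Rightarrow> ('v option \<times> ('o \<Rightarrow> 'v objstate)) option" where
  "apply_op k m (Rd x) = (case m x of RegS v \<Rightarrow> Some (Some v, m) | WRNS _ \<Rightarrow> None)"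
| "apply_op k m (Wr x v) = (case m x of RegS _ \<Rightarrow> Some (None, m(x := RegS v)) | WRNS _ \<Rightarrow> None)"
| "apply_op k m (Wrn x i v) = (case m x of RegS _ \<Rightarrow> None
     | WRNS A \<Rightarrow> if i < k then Some (A ((i + 1) mod k), m(x := WRNS (A(i := Some v)))) else None)"

text \<open>A deterministic algorithm: initial memory, initial local state of process p
  given its input, the next action of p in a local state, and the local state
  transition of p upon receiving a response.\<close>
record ('o, 'v, 's, 'a) protocol =
  mem0 :: "'o \<Rightarrow> 'v objstate"
  init :: "nat \<Rightarrow> 'a \<Rightarrow> 's"
  delta :: "nat \<Rightarrow> 's \<Rightarrow> ('o, 'v, 'a) act"
  upd :: "nat \<Rightarrow> 's \<Rightarrow> 'v option \<Rightarrow> 's"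

type_synonym ('o, 'v, 's) config = "('o \<Rightarrow> 'v objstate) \<times> (nat \<Rightarrow> 's)"

definition regs_and_wrn :: "('o \<Rightarrow> 'v objstate) \<Rightarrow> bool" where
  "regs_and_wrn m \<longleftrightarrow> (\<forall>x. (\<exists>v. m x = RegS v) \<or> m x = WRNS (\<lambda>_. None))"

definition decision :: "('o, 'v, 's, 'a) protocol \<Rightarrow> ('o, 'v, 's) config \<Rightarrow> nat \<Rightarrow> 'a option" where
  "decision A c p = (case delta A p (snd c p) of Decide a \<Rightarrow> Some a | Invoke _ \<Rightarrow> None)"

text \<open>One step of process p: a decided process takes no more steps; otherwise it applies
  its pending operation atomically (if the operation is not applicable the process
  is stuck).\<close>
definition step :: "nat \<Rightarrow> ('o, 'v, 's, 'a) protocol \<Rightarrow> nat \<Rightarrow> ('o, 'v, 's) config \<Rightarrow> ('o, 'v, 's) config" where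
  "step k A p c = (case delta A p (snd c p) of
      Decide _ \<Rightarrow> c
    | Invoke opr \<Rightarrow> (case apply_op k (fst c) opr of
         None \<Rightarrow> c
       | Some (r, m') \<Rightarrow> (m', (snd c)(p := upd A p (snd c p) r))))"

fun run :: "nat \<Rightarrow> ('o, 'v, 's, 'a) protocol \<Rightarrow> (nat \<Rightarrow> 'a) \<Rightarrow> (nat \<Rightarrow> nat) \<Rightarrow> nat \<Rightarrow> ('o, 'v, 's) config" where
  "run k A inp \<sigma> 0 = (mem0 A, \<lambda>p. init A p (inp p))"
| "run k A inp \<sigma> (Suc t) = step k A (\<sigma> t) (run k A inp \<sigma> t)"

text \<open>A solves 2-process consensus wait-free using registers and WRN_k objects:
  agreement and validity in every reachable configuration, and every process that
  takes infinitely many steps (i.e. does not crash) eventually decides.\<close>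
definition solves_consensus2 :: "nat \<Rightarrow> ('o, 'v, 's, 'a) protocol \<Rightarrow> bool" where
  "solves_consensus2 k A \<longleftrightarrow> regs_and_wrn (mem0 A) \<and>
    (\<forall>inp \<sigma>. (\<forall>t. \<sigma> t < 2) \<longrightarrow>
       (\<forall>t p q a b. p < 2 \<longrightarrow> q < 2 \<longrightarrow> decision A (run k A inp \<sigma> t) p = Some a
           \<longrightarrow> decision A (run k A inp \<sigma> t) q = Some b \<longrightarrow> a = b) \<and>
       (\<forall>t p a. p < 2 \<longrightarrow> decision A (run k A inp \<sigma> t) p = Some a \<longrightarrow> (\<exists>q<2. a = inp q)) \<and>
       (\<forall>p<2. (\<forall>n. \<exists>t\<ge>n. \<sigma> t = p) \<longrightarrow> (\<exists>t. decision A (run k A inp \<sigma> t) p \<noteq> None)))"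

end

theory Submission
  imports Defs
begin

text \<open>The classical valence argument of Fischer, Lynch and Paterson, as refined by Herlihy.
  The initial configuration with distinct inputs is bivalent, since each process running solo
  must decide its own input.  A wait-free protocol cannot stay bivalent forever, so some
  bivalent execution has only univalent one-step extensions (a critical configuration).
  There both processes are about to apply an operation.  For registers and for WRN_k objects
  with k \<ge> 3 the two operations either commute up to the response of one process, or one of
  them overwrites the effect of the other; in both cases some process ends in a configuration
  indistinguishable to it from one of opposite valence, and running it solo yields the same
  decision in both, a contradiction.\<close>

section \<open>Pairs of operations on registers and WRN objects\<close>

lemma Suc_mod_neq_self: "(i::nat) < k \<Longrightarrow> 2 \<le> k \<Longrightarrow> (i + 1) mod k \<noteq> i"
  by (auto simp add: mod_Suc)

lemma Suc_mod_not_2cycle: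
  "(i::nat) < k \<Longrightarrow> j < k \<Longrightarrow> 3 \<le> k \<Longrightarrow> (j + 1) mod k = i \<Longrightarrow> (i + 1) mod k \<noteq> j"
  by (auto simp add: mod_Suc split: if_splits)

text \<open>For two WRN
  operations on different cells of one object, k \<ge> 3 guarantees that at most one of them reads
  the cell written by the other.\<close>
lemma apply_op_pair:
  assumes k: "3 \<le> k" and h0: "apply_op k m o0 = Some (r0, m0)" and h1: "apply_op k m o1 = Some (r1, m1)"
  shows "(\<exists>r0' r1' m'. apply_op k m0 o1 = Some (r1', m') \<and> apply_op k m1 o0 = Some (r0', m')
            \<and> (r1' = r1 \<or> r0' = r0))
         \<or> apply_op k m0 o1 = Some (r1, m1) \<or> apply_op k m1 o0 = Some (r0, m0)"
proof (cases "\<exists>x i v j w. o0 = Wrn x i v \<and> o1 = Wrn x j w")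
  case False
  with h0 h1 show ?thesis
    by (cases o0; cases o1) (auto split: objstate.splits if_splits simp: fun_upd_twist)
next
  case True
  then obtain x i v j w where o0: "o0 = Wrn x i v" and o1: "o1 = Wrn x j w" by blast
  then obtain Ar where mx: "m x = WRNS Ar" and ik: "i < k" and jk: "j < k"
    and m0: "m0 = m(x := WRNS (Ar(i := Some v)))" and r0: "r0 = Ar ((i + 1) mod k)"
    and m1: "m1 = m(x := WRNS (Ar(j := Some w)))" and r1: "r1 = Ar ((j + 1) mod k)"
    using h0 h1 by (auto split: objstate.splits if_splits)
  show ?thesis
  proof (cases "i = j")
    case True
    then have "apply_op k m0 o1 = Some (r1, m1)"
      using ik k Suc_mod_neq_self[of j k] by (simp add: o1 m0 m1 r1 mx)
    then show ?thesis by simp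
  next
    case False
    define m' where "m' = m(x := WRNS (Ar(i := Some v, j := Some w)))"
    have m'_sym: "m' = m(x := WRNS (Ar(j := Some w, i := Some v)))"
      using False by (simp add: m'_def fun_upd_twist)
    have "apply_op k m0 o1 = Some ((Ar(i := Some v)) ((j + 1) mod k), m')"
      using jk by (simp add: o1 m0 m'_def)
    moreover have "apply_op k m1 o0 = Some ((Ar(j := Some w)) ((i + 1) mod k), m')"
      using ik by (simp add: o0 m1 m'_sym)
    moreover have "(j + 1) mod k \<noteq> i \<or> (i + 1) mod k \<noteq> j"
      using Suc_mod_not_2cycle[OF ik jk k] by blast
    ultimately show ?thesis using r0 r1 by auto
  qed
qed

definition exec :: "nat \<Rightarrow> ('o, 'v, 's, 'a) protocol \<Rightarrow> ('o, 'v, 's) config \<Rightarrow> nat list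
                      \<Rightarrow> ('o, 'v, 's) config" where
  "exec k A c l = foldl (\<lambda>c p. step k A p c) c l"

lemma exec_Nil [simp]: "exec k A c [] = c"
  by (simp add: exec_def)

lemma exec_Cons [simp]: "exec k A c (p # l) = exec k A (step k A p c) l"
  by (simp add: exec_def)

lemma exec_append: "exec k A c (l @ l') = exec k A (exec k A c l) l'"
  by (simp add: exec_def)

lemma exec_snoc: "exec k A c (l @ [p]) = step k A p (exec k A c l)"
  by (simp add: exec_def)

definition initial_config :: "('o, 'v, 's, 'a) protocol \<Rightarrow> (nat \<Rightarrow> 'a) \<Rightarrow> ('o, 'v, 's) config" where
  "initial_config A inp = (mem0 A, \<lambda>p. init A p (inp p))"

lemma run_eq_exec: "run k A inp \<sigma> t = exec k A (initial_config A inp) (map \<sigma> [0..<t])"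
  by (induction t) (simp_all add: initial_config_def exec_snoc)

definition sched_then :: "nat list \<Rightarrow> nat \<Rightarrow> nat \<Rightarrow> nat" where
  "sched_then l p t = (if t < length l then l ! t else p)"

lemma run_sched_then:
  assumes "length l \<le> t"
  shows "run k A inp (sched_then l p) t = exec k A (initial_config A inp) (l @ replicate (t - length l) p)"
proof -
  have "map (sched_then l p) [0..<t] = l @ replicate (t - length l) p"
    using assms by (intro nth_equalityI) (auto simp: sched_then_def nth_append)
  then show ?thesis by (simp add: run_eq_exec)
qed

definition sched2 :: "nat list \<Rightarrow> bool" where
  "sched2 l \<longleftrightarrow> (\<forall>p\<in>set l. p < 2)"

lemma sched2_simps [simp]:
  "sched2 []" "sched2 (p # l) \<longleftrightarrow> p < 2 \<and> sched2 l" "sched2 (l @ l') \<longleftrightarrow> sched2 l \<and> sched2 l'"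
  "sched2 (replicate n p) \<longleftrightarrow> n = 0 \<or> p < 2"
  by (auto simp: sched2_def)

lemma sched_then_less_2: "sched2 l \<Longrightarrow> p < 2 \<Longrightarrow> sched_then l p t < 2"
  by (auto simp: sched_then_def sched2_def)

lemma scheduled_infinitely_often:
  fixes \<sigma> :: "nat \<Rightarrow> nat"
  assumes "\<forall>t. \<sigma> t < 2"
  shows "\<exists>p<2. \<forall>n. \<exists>t\<ge>n. \<sigma> t = p"
proof (rule ccontr)
  assume "\<not> ?thesis"
  then have "\<exists>n. \<forall>t\<ge>n. \<sigma> t \<noteq> p" if "p < 2" for p
    using that by blast
  from this[of 0] this[of 1] obtain n0 n1
    where "\<forall>t\<ge>n0. \<sigma> t \<noteq> 0" and "\<forall>t\<ge>n1. \<sigma> t \<noteq> 1"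
    by auto
  then have "\<sigma> (max n0 n1) \<noteq> 0" "\<sigma> (max n0 n1) \<noteq> 1"
    by simp_all
  moreover have "\<sigma> (max n0 n1) < 2"
    using assms by blast
  ultimately show False
    by linarith
qed

lemma step_other: "q \<noteq> p \<Longrightarrow> snd (step k A q c) p = snd c p"
  unfolding step_def by (simp split: act.split option.split prod.split)

lemma step_decided: "delta A p (snd c p) = Decide a \<Longrightarrow> step k A p c = c"
  unfolding step_def by simp

lemma step_Invoke:
  "delta A p (snd c p) = Invoke opr \<Longrightarrow> apply_op k (fst c) opr = Some (r, m')
     \<Longrightarrow> step k A p c = (m', (snd c)(p := upd A p (snd c p) r))"
  unfolding step_def by simp

lemma step_disabled:
  "delta A p (snd c p) = Invoke opr \<Longrightarrow> apply_op k (fst c) opr = None \<Longrightarrow> step k A p c = c"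
  unfolding step_def by simp

lemma decision_step: "decision A c p = Some a \<Longrightarrow> decision A (step k A q c) p = Some a"
proof -
  assume dec: "decision A c p = Some a"
  then have "delta A p (snd c p) = Decide a"
    unfolding decision_def by (simp split: act.splits)
  then have "snd (step k A q c) p = snd c p"
    by (cases "q = p") (simp_all add: step_other step_decided)
  then show ?thesis using dec unfolding decision_def by simp
qed

lemma decision_exec: "decision A c p = Some a \<Longrightarrow> decision A (exec k A c l) p = Some a"
  by (induction l arbitrary: c) (auto simp: decision_step)

lemma decision_run_mono:
  "t \<le> t' \<Longrightarrow> decision A (run k A inp \<sigma> t) p = Some a \<Longrightarrow> decision A (run k A inp \<sigma> t') p = Some a"
  by (induction t' rule: dec_induct) (auto simp: decision_step)

definition indist :: "nat \<Rightarrow> ('o, 'v, 's) config \<Rightarrow> ('o, 'v, 's) config \<Rightarrow> bool" where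
  "indist p c c' \<longleftrightarrow> fst c = fst c' \<and> snd c p = snd c' p"

lemma decision_indist: "indist p c c' \<Longrightarrow> decision A c p = decision A c' p"
  by (simp add: indist_def decision_def)

lemma step_indist:
  assumes "indist p c c'"
  shows "indist p (step k A p c) (step k A p c')"
  using assms unfolding indist_def step_def
  by (simp split: act.split option.split prod.split)

lemma exec_solo_indist: "indist p c c' \<Longrightarrow> indist p (exec k A c (replicate n p)) (exec k A c' (replicate n p))"
  by (induction n arbitrary: c c') (simp_all add: step_indist)

section \<open>Valences of a consensus protocol\<close>

locale consensus2_solution =
  fixes k :: nat and A :: "('o, 'v, 's, 'a) protocol"
  assumes solves: "solves_consensus2 k A" and k3: "3 \<le> k"
begin

abbreviation cfg :: "(nat \<Rightarrow> 'a) \<Rightarrow> nat list \<Rightarrow> ('o, 'v, 's) config" where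
  "cfg inp l \<equiv> exec k A (initial_config A inp) l"

lemma
  assumes "\<forall>t. \<sigma> t < 2"
  shows agreement_run: "p < 2 \<Longrightarrow> q < 2 \<Longrightarrow> decision A (run k A inp \<sigma> t) p = Some a
      \<Longrightarrow> decision A (run k A inp \<sigma> t) q = Some b \<Longrightarrow> a = b"
    and validity_run: "p < 2 \<Longrightarrow> decision A (run k A inp \<sigma> t) p = Some a \<Longrightarrow> \<exists>q<2. a = inp q"
    and wait_freedom_run: "p < 2 \<Longrightarrow> \<forall>n. \<exists>t\<ge>n. \<sigma> t = p \<Longrightarrow> \<exists>t. decision A (run k A inp \<sigma> t) p \<noteq> None"
  using solves[unfolded solves_consensus2_def, THEN conjunct2, THEN spec[of _ inp], THEN spec[of _ \<sigma>],
      THEN mp, OF assms]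
  by blast+

lemma agreement:
  assumes "sched2 l" "p < 2" "q < 2" "decision A (cfg inp l) p = Some a" "decision A (cfg inp l) q = Some b"
  shows "a = b"
  using agreement_run[of "sched_then l 0" p q inp "length l" a b] assms
  by (simp add: sched_then_less_2 run_sched_then)

lemma validity:
  assumes "sched2 l" "p < 2" "decision A (cfg inp l) p = Some a"
  shows "\<exists>q<2. a = inp q"
  using validity_run[of "sched_then l 0" p inp "length l" a] assms
  by (simp add: sched_then_less_2 run_sched_then)

lemma solo_termination:
  assumes "sched2 l" "p < 2"
  obtains n a where "decision A (cfg inp (l @ replicate n p)) p = Some a"
proof -
  let ?\<sigma> = "sched_then l p"
  have "\<forall>t. ?\<sigma> t < 2"
    using assms by (simp add: sched_then_less_2)
  moreover have "\<forall>n. \<exists>t\<ge>n. ?\<sigma> t = p"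
    by (metis max.cobounded1 max.cobounded2 not_le sched_then_def)
  ultimately obtain t a where "decision A (run k A inp ?\<sigma> t) p = Some a"
    using wait_freedom_run assms(2) by blast
  then have "decision A (run k A inp ?\<sigma> (max t (length l))) p = Some a"
    by (rule decision_run_mono[rotated]) simp
  then show ?thesis
    using that by (simp add: run_sched_then)
qed

definition valences :: "(nat \<Rightarrow> 'a) \<Rightarrow> nat list \<Rightarrow> 'a set" where
  "valences inp l = {d. \<exists>ys p. p < 2 \<and> sched2 ys \<and> decision A (cfg inp (l @ ys)) p = Some d}"

definition bivalent :: "(nat \<Rightarrow> 'a) \<Rightarrow> nat list \<Rightarrow> bool" where
  "bivalent inp l \<longleftrightarrow> (\<exists>x y. x \<noteq> y \<and> x \<in> valences inp l \<and> y \<in> valences inp l)"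

definition critical :: "(nat \<Rightarrow> 'a) \<Rightarrow> nat list \<Rightarrow> bool" where
  "critical inp l \<longleftrightarrow> bivalent inp l \<and> \<not> bivalent inp (l @ [0]) \<and> \<not> bivalent inp (l @ [1])"

lemma valencesI:
  "p < 2 \<Longrightarrow> sched2 ys \<Longrightarrow> decision A (cfg inp (l @ ys)) p = Some d \<Longrightarrow> d \<in> valences inp l"
  unfolding valences_def by blast

lemma valences_append_subset: "sched2 xs \<Longrightarrow> valences inp (l @ xs) \<subseteq> valences inp l"
proof
  fix d assume xs: "sched2 xs" and "d \<in> valences inp (l @ xs)"
  then obtain ys p where "p < 2" "sched2 ys" "decision A (cfg inp ((l @ xs) @ ys)) p = Some d"
    unfolding valences_def by blast
  with xs show "d \<in> valences inp l"
    using valencesI[of p "xs @ ys" inp l d] by simp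
qed

lemma valences_subset_successors:
  assumes "\<forall>p<2. decision A (cfg inp l) p = None"
  shows "valences inp l \<subseteq> valences inp (l @ [0]) \<union> valences inp (l @ [1])"
proof
  fix d assume "d \<in> valences inp l"
  then obtain ys p where p: "p < 2" "sched2 ys" "decision A (cfg inp (l @ ys)) p = Some d"
    unfolding valences_def by blast
  with assms obtain q ys' where ys: "ys = q # ys'"
    by (cases ys) auto
  with p have "q < 2" "d \<in> valences inp (l @ [q])"
    using valencesI[of p ys' inp "l @ [q]" d] by auto
  then show "d \<in> valences inp (l @ [0]) \<union> valences inp (l @ [1])"
    using less_2_cases_iff by auto
qed

lemma bivalent_undecided:
  assumes "sched2 l" "bivalent inp l" "p < 2"
  shows "decision A (cfg inp l) p = None"
proof (rule ccontr)
  assume "decision A (cfg inp l) p \<noteq> None"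
  then obtain a where a: "decision A (cfg inp l) p = Some a" by auto
  have "d = a" if "d \<in> valences inp l" for d
  proof -
    from that obtain ys q where q: "q < 2" "sched2 ys" "decision A (cfg inp (l @ ys)) q = Some d"
      unfolding valences_def by blast
    moreover have "decision A (cfg inp (l @ ys)) p = Some a"
      using decision_exec[OF a] by (simp add: exec_append)
    ultimately show ?thesis
      using agreement[of "l @ ys" q p inp d a] assms by simp
  qed
  then show False
    using assms(2) unfolding bivalent_def by blast
qed

lemma indist_common_valence:
  assumes "sched2 l0" "sched2 l1" "p < 2" "indist p (cfg inp l0) (cfg inp l1)"
  shows "valences inp l0 \<inter> valences inp l1 \<noteq> {}"
proof -
  obtain n a where a: "decision A (cfg inp (l0 @ replicate n p)) p = Some a"
    using solo_termination[OF assms(1,3)] .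
  have "indist p (cfg inp (l0 @ replicate n p)) (cfg inp (l1 @ replicate n p))"
    using exec_solo_indist[OF assms(4)] by (simp add: exec_append)
  with a have "decision A (cfg inp (l1 @ replicate n p)) p = Some a"
    by (simp add: decision_indist)
  with a assms(3) show ?thesis
    using valencesI[of p "replicate n p" inp l0 a] valencesI[of p "replicate n p" inp l1 a] by auto
qed

lemma input_valence:
  assumes "q < 2"
  shows "inp q \<in> valences inp []"
proof -
  let ?inp' = "\<lambda>_::nat. inp q"
  obtain n d where d: "decision A (cfg inp ([] @ replicate n q)) q = Some d"
    using solo_termination[of "[]" q] assms by auto
  have "indist q (initial_config A inp) (initial_config A ?inp')"
    by (simp add: indist_def initial_config_def)
  then have "indist q (cfg inp (replicate n q)) (cfg ?inp' (replicate n q))"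
    by (rule exec_solo_indist)
  with d have "decision A (cfg ?inp' (replicate n q)) q = Some d"
    by (simp add: decision_indist)
  then have "d = inp q"
    using validity[of "replicate n q" q ?inp' d] assms by auto
  then show ?thesis
    using valencesI[OF assms, of "replicate n q" inp "[]" d] d assms by simp
qed

lemma initial_bivalent: "inp 0 \<noteq> inp 1 \<Longrightarrow> bivalent inp []"
  unfolding bivalent_def using input_valence[of 0 inp] input_valence[of 1 inp] by auto

lemma critical_exists:
  assumes "bivalent inp []"
  shows "\<exists>l. sched2 l \<and> critical inp l"
proof (rule ccontr)
  assume "\<not> ?thesis"
  then have "bivalent inp (l @ [0]) \<or> bivalent inp (l @ [1])" if "sched2 l" "bivalent inp l" for l
    using that unfolding critical_def by blast
  then have "\<exists>q<2. bivalent inp (l @ [q])" if "sched2 l" "bivalent inp l" for l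
    using that by force
  then obtain nxt where nxt: "\<And>l. sched2 l \<Longrightarrow> bivalent inp l \<Longrightarrow> nxt l < 2 \<and> bivalent inp (l @ [nxt l])"
    by metis
  define g where "g = rec_nat [] (\<lambda>_ l. l @ [nxt l])"
  define \<sigma> where "\<sigma> n = nxt (g n)" for n
  have g_Suc: "g (Suc n) = g n @ [\<sigma> n]" for n
    by (simp add: g_def \<sigma>_def)
  have g_bivalent: "sched2 (g n) \<and> bivalent inp (g n)" for n
    by (induction n) (simp_all add: g_def assms nxt)
  have \<sigma>_less_2: "\<forall>t. \<sigma> t < 2"
    by (simp add: \<sigma>_def g_bivalent nxt)
  have run_g: "run k A inp \<sigma> n = cfg inp (g n)" for n
  proof -
    have "map \<sigma> [0..<n] = g n"
      by (induction n) (simp_all add: g_Suc, simp add: g_def)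
    then show ?thesis by (simp add: run_eq_exec)
  qed
  obtain p where "p < 2" "\<forall>n. \<exists>t\<ge>n. \<sigma> t = p"
    using scheduled_infinitely_often[OF \<sigma>_less_2] by blast
  then obtain t where "decision A (run k A inp \<sigma> t) p \<noteq> None"
    using wait_freedom_run[OF \<sigma>_less_2] by blast
  moreover have "decision A (run k A inp \<sigma> t) p = None"
    unfolding run_g using bivalent_undecided g_bivalent \<open>p < 2\<close> by blast
  ultimately show False
    by contradiction
qed

lemma critical_step_enabled:
  assumes "sched2 l" "critical inp l" "q < 2"
  obtains opr r m' where "delta A q (snd (cfg inp l) q) = Invoke opr"
    and "apply_op k (fst (cfg inp l)) opr = Some (r, m')"
proof -
  have biv: "bivalent inp l" and not_biv: "\<not> bivalent inp (l @ [q])"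
    using assms(2,3) less_2_cases_iff unfolding critical_def by auto
  obtain opr where opr: "delta A q (snd (cfg inp l) q) = Invoke opr"
    using bivalent_undecided[OF assms(1) biv assms(3)] unfolding decision_def
    by (auto split: act.splits)
  moreover have "apply_op k (fst (cfg inp l)) opr \<noteq> None"
  proof
    assume "apply_op k (fst (cfg inp l)) opr = None"
    then have "cfg inp (l @ [q] @ ys) = cfg inp (l @ ys)" for ys
      using opr by (simp add: exec_append step_disabled)
    then have "valences inp (l @ [q]) = valences inp l"
      unfolding valences_def by simp
    with biv not_biv show False
      unfolding bivalent_def by simp
  qed
  ultimately show ?thesis
    using that by auto
qed

lemma critical_successors_disjoint:
  assumes "sched2 l" "critical inp l"
  shows "valences inp (l @ [0]) \<inter> valences inp (l @ [1]) = {}"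
proof (rule ccontr)
  assume "valences inp (l @ [0]) \<inter> valences inp (l @ [1]) \<noteq> {}"
  then obtain d where d: "d \<in> valences inp (l @ [0])" "d \<in> valences inp (l @ [1])"
    by blast
  with assms(2) have "valences inp (l @ [0]) \<union> valences inp (l @ [1]) \<subseteq> {d}"
    unfolding critical_def bivalent_def by blast
  moreover have "valences inp l \<subseteq> valences inp (l @ [0]) \<union> valences inp (l @ [1])"
    using assms bivalent_undecided valences_subset_successors unfolding critical_def by blast
  ultimately show False
    using assms(2) unfolding critical_def bivalent_def by blast
qed

lemma critical_distinguishable:
  assumes "sched2 l" "critical inp l" "sched2 xs" "sched2 ys" "p < 2"
  shows "\<not> indist p (cfg inp (l @ 0 # xs)) (cfg inp (l @ 1 # ys))"
proof
  assume "indist p (cfg inp (l @ 0 # xs)) (cfg inp (l @ 1 # ys))"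
  with assms have "valences inp (l @ 0 # xs) \<inter> valences inp (l @ 1 # ys) \<noteq> {}"
    by (intro indist_common_valence) simp_all
  moreover have "valences inp (l @ q # zs) \<subseteq> valences inp (l @ [q])" if "sched2 zs" for q zs
    using valences_append_subset[OF that, of inp "l @ [q]"] by simp
  ultimately show False
    using critical_successors_disjoint[OF assms(1,2)] assms(3,4) by blast
qed

lemma not_critical:
  assumes "sched2 l"
  shows "\<not> critical inp l"
proof
  assume crit: "critical inp l"
  define s where "s = snd (cfg inp l)"
  obtain o0 r0 m0 where d0: "delta A 0 (s 0) = Invoke o0" and a0: "apply_op k (fst (cfg inp l)) o0 = Some (r0, m0)"
    using critical_step_enabled[OF assms crit, of 0] unfolding s_def by auto
  obtain o1 r1 m1 where d1: "delta A 1 (s 1) = Invoke o1" and a1: "apply_op k (fst (cfg inp l)) o1 = Some (r1, m1)"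
    using critical_step_enabled[OF assms crit, of 1] unfolding s_def by auto
  let ?s0 = "\<lambda>r. s(0 := upd A 0 (s 0) r)" and ?s1 = "\<lambda>r. s(1 := upd A 1 (s 1) r)"
  have c0: "cfg inp (l @ [0]) = (m0, ?s0 r0)" and c1: "cfg inp (l @ [1]) = (m1, ?s1 r1)"
    using d0 a0 d1 a1 by (simp_all add: exec_snoc step_Invoke s_def)
  have c01: "cfg inp (l @ [0, 1]) = step k A 1 (m0, ?s0 r0)"
   and c10: "cfg inp (l @ [1, 0]) = step k A 0 (m1, ?s1 r1)"
    using c0 c1 by (simp_all add: exec_append)
  have distinguishable: "\<not> indist p (cfg inp (l @ 0 # xs)) (cfg inp (l @ 1 # ys))"
    if "sched2 xs" "sched2 ys" "p < 2" for p xs ys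
    using critical_distinguishable[OF assms crit that] .
  from apply_op_pair[OF k3 a0 a1] show False
  proof (elim disjE)
    assume "\<exists>r0' r1' m'. apply_op k m0 o1 = Some (r1', m') \<and> apply_op k m1 o0 = Some (r0', m')
      \<and> (r1' = r1 \<or> r0' = r0)"
    then obtain r0' r1' m' where "apply_op k m0 o1 = Some (r1', m')" "apply_op k m1 o0 = Some (r0', m')"
      and "r1' = r1 \<or> r0' = r0"
      by blast
    then have "indist 1 (cfg inp (l @ [0, 1])) (cfg inp (l @ [1, 0])) \<or>
               indist 0 (cfg inp (l @ [0, 1])) (cfg inp (l @ [1, 0]))"
      using c01 c10 d0 d1 by (auto simp: step_Invoke indist_def)
    then show False
      using distinguishable[of "[1]" "[0]"] by auto
  next
    assume "apply_op k m0 o1 = Some (r1, m1)"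
    then have "indist 1 (cfg inp (l @ [0, 1])) (cfg inp (l @ [1]))"
      using c01 c1 d1 by (simp add: step_Invoke indist_def)
    then show False
      using distinguishable[of "[1]" "[]"] by simp
  next
    assume "apply_op k m1 o0 = Some (r0, m0)"
    then have "indist 0 (cfg inp (l @ [0])) (cfg inp (l @ [1, 0]))"
      using c10 c0 d0 by (simp add: step_Invoke indist_def)
    then show False
      using distinguishable[of "[]" "[0]"] by simp
  qed
qed

end

theorem lemma1:
  fixes k :: nat and A :: "('o, 'v, 's, 'a) protocol"
  assumes "k \<ge> 3" and "\<exists>a b :: 'a. a \<noteq> b"
  shows "\<not> solves_consensus2 k A"
proof
  assume "solves_consensus2 k A"
  then interpret consensus2_solution k A
    using assms(1) by unfold_locales
  obtain a b :: 'a where "a \<noteq> b"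
    using assms(2) by blast
  then have "bivalent (\<lambda>p. if p = 0 then a else b) []"
    by (intro initial_bivalent) simp
  then show False
    using critical_exists not_critical by blast
qed

end
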